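(* Let $P$ be a disjunctive finitely recursive program and $P_1,P_2,\dots$ a module sequence for $P$. A ground formula $F$ in the language of $P$ is a skeptical consequence of $P$ if and only if there exists a finite $k\ge1$ such that $F$ is a skeptical consequence of $P_k$ and $\mathit{atom}(F)\subseteq\mathit{atom}(P_k)$.
   Context: A disjunctive program is a set of rules $A_1\vee\dots\vee A_m\leftarrow L_1,\dots,L_n$ ($m>0$, $n\ge0$), $A_j$ atoms, $L_i$ atoms or negated atoms $\mathtt{not}\,A$, possibly with function symbols; $head(r)=\{A_1,\dots,A_m\}$. $\mathsf{Ground}(P)$ is its ground instantiation; for a set $X$ of ground rules, $\mathit{atom}(X)$ is the set of ground atoms occurring in $X$. For a set $Q$ of ground rules and a set $M$ of ground atoms, $Q^M$ is obtained by deleting rules of $Q$ having some $\mathtt{not}\,B$ in the body with $B\in M$ and deleting negative literals from the remaining rules; $M$ is a stable model of $Q$ iff it is a minimal Herbrand model of $Q^M$ (stable models of $P$ are those of $\mathsf{Ground}(P)$). A ground formula is a closed propositional combination of ground atoms; $\mathit{atom}(F)$ is the set of ground atoms occurring in $F$. $F$ is a skeptical consequence of a program iff $F$ is (classically) true in every stable model of it (vacuously if there is none). The dependency graph has ground atoms as vertices and an edge $A\to B$ whenever some $r\in\mathsf{Ground}(P)$ has $A\in head(r)$ and $B$ occurring in $r$ (body or head); $A$ depends on $B$ if there is a directed path from $A$ to $B$ (every atom depends on itself). $P$ is finitely recursive iff each ground atom depends on finitely many ground atoms. With $GH$ the set of ground head atoms of $\mathsf{Ground}(P)$ and an enumeration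 $p_1,p_2,\dots$ of $GH$, the induced module sequence is $P_1=\{r\in\mathsf{Ground}(P)\mid p_1$ depends on some atom of $head(r)\}$, $P_{i+1}=P_i\cup\{r\in\mathsf{Ground}(P)\mid p_{i+1}$ depends on some atom of $head(r)\}$. *)

theory Defs
  imports Main
begin

text \<open>Ground disjunctive rules over a type 'a of ground atoms:
  Rule heads posbody negbody  stands for  A1 v ... v Am <- B1,...,Bk, not C1,...,not Cl.\<close>
datatype 'a rule = Rule (rhead: "'a list") (rpos: "'a list") (rneg: "'a list")

definition head :: "'a rule \<Rightarrow> 'a set" where
  "head r = set (rhead r)"

definition rule_atoms :: "'a rule \<Rightarrow> 'a set" where
  "rule_atoms r = set (rhead r) \<union> set (rpos r) \<union> set (rneg r)"

definition atom :: "'a rule set \<Rightarrow> 'a set" where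
  "atom X = (\<Union>r\<in>X. rule_atoms r)"

definition disjunctive_program :: "'a rule set \<Rightarrow> bool" where
  "disjunctive_program Q \<longleftrightarrow> (\<forall>r\<in>Q. rhead r \<noteq> [])"

definition reduct :: "'a rule set \<Rightarrow> 'a set \<Rightarrow> 'a rule set" where
  "reduct Q M = {Rule (rhead r) (rpos r) [] | r. r \<in> Q \<and> set (rneg r) \<inter> M = {}}"

definition is_model :: "'a rule set \<Rightarrow> 'a set \<Rightarrow> bool" where
  "is_model Q M \<longleftrightarrow> (\<forall>r\<in>Q. set (rpos r) \<subseteq> M \<and> set (rneg r) \<inter> M = {} \<longrightarrow> head r \<inter> M \<noteq> {})"

definition minimal_model :: "'a rule set \<Rightarrow> 'a set \<Rightarrow> bool" where
  "minimal_model Q M \<longleftrightarrow> is_model Q M \<and> (\<forall>N. N \<subset> M \<longrightarrow> \<not> is_model Q N)"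

definition stable_model :: "'a rule set \<Rightarrow> 'a set \<Rightarrow> bool" where
  "stable_model Q M \<longleftrightarrow> minimal_model (reduct Q M) M"

datatype 'a form = FAtom 'a | FTrue | FFalse | FNot "'a form"
  | FAnd "'a form" "'a form" | FOr "'a form" "'a form" | FImp "'a form" "'a form"

fun holds :: "'a set \<Rightarrow> 'a form \<Rightarrow> bool" where
  "holds M (FAtom A) = (A \<in> M)"
| "holds M FTrue = True"
| "holds M FFalse = False"
| "holds M (FNot F) = (\<not> holds M F)"
| "holds M (FAnd F G) = (holds M F \<and> holds M G)"
| "holds M (FOr F G) = (holds M F \<or> holds M G)"
| "holds M (FImp F G) = (holds M F \<longrightarrow> holds M G)"

fun form_atoms :: "'a form \<Rightarrow> 'a set" where
  "form_atoms (FAtom A) = {A}"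
| "form_atoms FTrue = {}"
| "form_atoms FFalse = {}"
| "form_atoms (FNot F) = form_atoms F"
| "form_atoms (FAnd F G) = form_atoms F \<union> form_atoms G"
| "form_atoms (FOr F G) = form_atoms F \<union> form_atoms G"
| "form_atoms (FImp F G) = form_atoms F \<union> form_atoms G"

definition skeptical_consequence :: "'a rule set \<Rightarrow> 'a form \<Rightarrow> bool" where
  "skeptical_consequence Q F \<longleftrightarrow> (\<forall>M. stable_model Q M \<longrightarrow> holds M F)"

definition dep_edge :: "'a rule set \<Rightarrow> 'a \<Rightarrow> 'a \<Rightarrow> bool" where
  "dep_edge Q A B \<longleftrightarrow> (\<exists>r\<in>Q. A \<in> head r \<and> B \<in> rule_atoms r)"

definition depends :: "'a rule set \<Rightarrow> 'a \<Rightarrow> 'a \<Rightarrow> bool" where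
  "depends Q A B \<longleftrightarrow> (dep_edge Q)\<^sup>*\<^sup>* A B"

definition finitely_recursive :: "'a rule set \<Rightarrow> bool" where
  "finitely_recursive Q \<longleftrightarrow> (\<forall>A. finite {B. depends Q A B})"

definition GH :: "'a rule set \<Rightarrow> 'a set" where
  "GH Q = (\<Union>r\<in>Q. head r)"

definition enumeration :: "'a rule set \<Rightarrow> (nat \<Rightarrow> 'a) \<Rightarrow> bool" where
  "enumeration Q p \<longleftrightarrow> p ` {1..} = GH Q"

definition module_seq :: "'a rule set \<Rightarrow> (nat \<Rightarrow> 'a) \<Rightarrow> nat \<Rightarrow> 'a rule set" where
  "module_seq Q p k = {r \<in> Q. \<exists>i\<in>{1..k}. \<exists>A\<in>head r. depends Q (p i) A}"

end

theory Submission
  imports Defs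
begin

text \<open>If some finite k has F as a skeptical consequence of P_k, then F holds in every stable model
  of P: the atoms on which p_1, ..., p_k depend form a splitting set of P whose bottom is P_k, so
  every stable model of P restricts to a stable model of P_k. Conversely, suppose F fails in some
  stable model of every P_k. Since P is finitely recursive, each P_k has only finitely many
  countermodels, and restriction maps countermodels of P_m to countermodels of P_k for k \<le> m.
  By Koenig's lemma there is a coherent choice of countermodels, whose union is a stable model of
  P falsifying F.\<close>

lemma rule_parts_subset_atom:
  assumes "r \<in> Q"
  shows "head r \<subseteq> atom Q" "set (rpos r) \<subseteq> atom Q" "set (rneg r) \<subseteq> atom Q"
  using assms unfolding atom_def rule_atoms_def head_def by auto

lemma is_model_reduct_iff:
  "is_model (reduct Q M) N \<longleftrightarrow>
   (\<forall>r\<in>Q. set (rneg r) \<inter> M = {} \<longrightarrow> set (rpos r) \<subseteq> N \<longrightarrow> head r \<inter> N \<noteq> {})"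
proof
  assume N: "is_model (reduct Q M) N"
  show "\<forall>r\<in>Q. set (rneg r) \<inter> M = {} \<longrightarrow> set (rpos r) \<subseteq> N \<longrightarrow> head r \<inter> N \<noteq> {}"
  proof (intro ballI impI)
    fix r assume r: "r \<in> Q" "set (rneg r) \<inter> M = {}" "set (rpos r) \<subseteq> N"
    then have "Rule (rhead r) (rpos r) [] \<in> reduct Q M"
      unfolding reduct_def by blast
    with N r show "head r \<inter> N \<noteq> {}"
      unfolding is_model_def head_def by fastforce
  qed
next
  assume "\<forall>r\<in>Q. set (rneg r) \<inter> M = {} \<longrightarrow> set (rpos r) \<subseteq> N \<longrightarrow> head r \<inter> N \<noteq> {}"
  then show "is_model (reduct Q M) N"
    unfolding is_model_def reduct_def head_def by auto
qed

lemma stable_model_rule: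
  "stable_model Q M \<Longrightarrow> r \<in> Q \<Longrightarrow> set (rneg r) \<inter> M = {} \<Longrightarrow> set (rpos r) \<subseteq> M
    \<Longrightarrow> head r \<inter> M \<noteq> {}"
  unfolding stable_model_def minimal_model_def is_model_reduct_iff by blast

lemma stable_model_minimal: "stable_model Q M \<Longrightarrow> N \<subset> M \<Longrightarrow> \<not> is_model (reduct Q M) N"
  unfolding stable_model_def minimal_model_def by blast

lemma stable_model_subset_atom:
  assumes M: "stable_model Q M"
  shows "M \<subseteq> atom Q"
proof (rule ccontr)
  assume "\<not> M \<subseteq> atom Q"
  then have "M \<inter> atom Q \<subset> M" by blast
  moreover have "is_model (reduct Q M) (M \<inter> atom Q)"
    unfolding is_model_reduct_iff
  proof (intro ballI impI)
    fix r assume r: "r \<in> Q" "set (rneg r) \<inter> M = {}" "set (rpos r) \<subseteq> M \<inter> atom Q"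
    then have "head r \<inter> M \<noteq> {}" using stable_model_rule[OF M] by blast
    with rule_parts_subset_atom(1)[OF r(1)] show "head r \<inter> (M \<inter> atom Q) \<noteq> {}" by blast
  qed
  ultimately show False using stable_model_minimal[OF M] by blast
qed

text \<open>In the terminology of Lifschitz and Turner, U is a splitting set of R and Q is its bottom.\<close>

lemma stable_model_restrict:
  assumes "Q \<subseteq> R" and atom_Q: "atom Q \<subseteq> U"
    and bottom: "\<And>r. r \<in> R \<Longrightarrow> head r \<inter> U \<noteq> {} \<Longrightarrow> r \<in> Q"
    and M: "stable_model R M"
  shows "stable_model Q (M \<inter> U)"
proof -
  have rule_U: "head r \<subseteq> U" "set (rpos r) \<subseteq> U" "set (rneg r) \<subseteq> U" if "r \<in> Q" for r
    using rule_parts_subset_atom[OF that] atom_Q by blast+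
  have "is_model (reduct Q (M \<inter> U)) (M \<inter> U)"
    unfolding is_model_reduct_iff
  proof (intro ballI impI)
    fix r assume r: "r \<in> Q" "set (rneg r) \<inter> (M \<inter> U) = {}" "set (rpos r) \<subseteq> M \<inter> U"
    with rule_U(3)[OF r(1)] have "set (rneg r) \<inter> M = {}" by blast
    with r \<open>Q \<subseteq> R\<close> have "head r \<inter> M \<noteq> {}" using stable_model_rule[OF M] by blast
    with rule_U(1)[OF r(1)] show "head r \<inter> (M \<inter> U) \<noteq> {}" by blast
  qed
  moreover have "\<not> is_model (reduct Q (M \<inter> U)) N" if "N \<subset> M \<inter> U" for N
  proof
    assume N: "is_model (reduct Q (M \<inter> U)) N"
    \<comment> \<open>Rules outside the bottom have heads disjoint from U, so M - U keeps them satisfied.\<close>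
    have "is_model (reduct R M) (N \<union> (M - U))"
      unfolding is_model_reduct_iff
    proof (intro ballI impI)
      fix r assume r: "r \<in> R" "set (rneg r) \<inter> M = {}" "set (rpos r) \<subseteq> N \<union> (M - U)"
      show "head r \<inter> (N \<union> (M - U)) \<noteq> {}"
      proof (cases "r \<in> Q")
        case True
        with rule_U(2) r(3) have "set (rpos r) \<subseteq> N" by blast
        with N True r(2) show ?thesis unfolding is_model_reduct_iff by blast
      next
        case False
        with bottom r(1) have "head r \<inter> U = {}" by blast
        moreover from r \<open>N \<subset> M \<inter> U\<close> have "head r \<inter> M \<noteq> {}"
          using stable_model_rule[OF M] by blast
        ultimately show ?thesis by blast
      qed
    qed
    moreover from \<open>N \<subset> M \<inter> U\<close> have "N \<union> (M - U) \<subset> M" by blast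
    ultimately show False using stable_model_minimal[OF M] by blast
  qed
  ultimately show ?thesis unfolding stable_model_def minimal_model_def by blast
qed

lemma stable_model_limit:
  fixes Q :: "nat \<Rightarrow> 'a rule set" and D :: "nat \<Rightarrow> 'a set"
  assumes Q_sub: "\<And>n. Q n \<subseteq> P" and cover: "\<And>r. r \<in> P \<Longrightarrow> \<exists>n. r \<in> Q n"
    and atom_Q: "\<And>n. atom (Q n) \<subseteq> D n" and M_sub: "M \<subseteq> (\<Union>n. D n)"
    and stable: "\<And>n. stable_model (Q n) (M \<inter> D n)"
  shows "stable_model P M"
proof -
  have rule_D: "head r \<subseteq> D n" "set (rpos r) \<subseteq> D n" "set (rneg r) \<subseteq> D n"
    if "r \<in> Q n" for r n
    using rule_parts_subset_atom[OF that] atom_Q[of n] by blast+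
  have "is_model (reduct P M) M"
    unfolding is_model_reduct_iff
  proof (intro ballI impI)
    fix r assume r: "r \<in> P" "set (rneg r) \<inter> M = {}" "set (rpos r) \<subseteq> M"
    then obtain n where n: "r \<in> Q n" using cover by blast
    with r rule_D(2,3)[OF n]
    have "head r \<inter> (M \<inter> D n) \<noteq> {}" using stable_model_rule[OF stable] by blast
    then show "head r \<inter> M \<noteq> {}" by blast
  qed
  moreover have "\<not> is_model (reduct P M) N" if "N \<subset> M" for N
  proof
    assume N: "is_model (reduct P M) N"
    obtain x n where x: "x \<in> M" "x \<notin> N" "x \<in> D n"
      using \<open>N \<subset> M\<close> M_sub by blast
    have "is_model (reduct (Q n) (M \<inter> D n)) (N \<inter> D n)"
      unfolding is_model_reduct_iff
    proof (intro ballI impI)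
      fix r assume r: "r \<in> Q n" "set (rneg r) \<inter> (M \<inter> D n) = {}" "set (rpos r) \<subseteq> N \<inter> D n"
      with rule_D(3)[OF r(1)] Q_sub have "head r \<inter> N \<noteq> {}"
        using N unfolding is_model_reduct_iff by blast
      with rule_D(1)[OF r(1)] show "head r \<inter> (N \<inter> D n) \<noteq> {}" by blast
    qed
    moreover from x \<open>N \<subset> M\<close> have "N \<inter> D n \<subset> M \<inter> D n" by blast
    ultimately show False using stable_model_minimal[OF stable] by blast
  qed
  ultimately show ?thesis unfolding stable_model_def minimal_model_def by blast
qed

lemma holds_inter: "form_atoms F \<subseteq> U \<Longrightarrow> holds (M \<inter> U) F = holds M F"
  by (induction F) auto

lemma finite_form_atoms: "finite (form_atoms F)"
  by (induction F) auto

text \<open>Among finitely many candidates, one is a restriction at infinitely many levels, hence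
  at all levels, since restrictions compose.\<close>

lemma pigeonhole_restriction:
  fixes D :: "nat \<Rightarrow> 'a set" and S :: "nat \<Rightarrow> 'a set set"
  assumes "mono D" and restrict: "\<And>k m Y. k \<le> m \<Longrightarrow> Y \<in> S m \<Longrightarrow> Y \<inter> D k \<in> S k"
    and "finite C" and hit: "\<And>m. k \<le> m \<Longrightarrow> \<exists>Y\<in>S m. Y \<inter> D k \<in> C"
  shows "\<exists>X\<in>C. \<forall>m\<ge>k. \<exists>Y\<in>S m. Y \<inter> D k = X"
proof -
  have "\<exists>X\<in>C. \<exists>Y\<in>S m. Y \<inter> D k = X" if "k \<le> m" for m
    using hit[OF that] by blast
  then have "\<forall>\<^sub>F m in sequentially. \<exists>X\<in>C. \<exists>Y\<in>S m. Y \<inter> D k = X"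
    by (rule eventually_sequentiallyI)
  then have "\<exists>\<^sub>F m in sequentially. \<exists>X\<in>C. \<exists>Y\<in>S m. Y \<inter> D k = X"
    by (simp add: eventually_frequently)
  from frequently_bex_finite[OF \<open>finite C\<close> this] obtain X
    where "X \<in> C" and often: "\<exists>\<^sub>F m in sequentially. \<exists>Y\<in>S m. Y \<inter> D k = X"
    by blast
  have "\<exists>Y\<in>S m. Y \<inter> D k = X" if "k \<le> m" for m
  proof -
    obtain m' Y where "m \<le> m'" "Y \<in> S m'" "Y \<inter> D k = X"
      using often unfolding frequently_sequentially by blast
    moreover have "D k \<subseteq> D m" using \<open>mono D\<close> \<open>k \<le> m\<close> by (rule monoD)
    ultimately have "Y \<inter> D m \<in> S m" "Y \<inter> D m \<inter> D k = X"
      using restrict by blast+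
    then show ?thesis by blast
  qed
  with \<open>X \<in> C\<close> show ?thesis by blast
qed

lemma Union_coherent_inter:
  fixes D f :: "nat \<Rightarrow> 'a set"
  assumes "mono D" and f_sub: "\<And>n. f n \<subseteq> D n" and f_Suc: "\<And>n. f (Suc n) \<inter> D n = f n"
  shows "(\<Union>n. f n) \<inter> D k = f k"
proof -
  have coherent: "f m \<inter> D i = f i" if "i \<le> m" for i m
    using that
  proof (induction m rule: dec_induct)
    case base
    show ?case using f_sub[of i] by blast
  next
    case (step m)
    have "D i \<subseteq> D m" using \<open>mono D\<close> \<open>i \<le> m\<close> by (rule monoD)
    then show ?case using f_Suc[of m] step.IH by blast
  qed
  show ?thesis
  proof
    show "(\<Union>n. f n) \<inter> D k \<subseteq> f k"
    proof
      fix x assume "x \<in> (\<Union>n. f n) \<inter> D k"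
      then obtain j where "x \<in> f j" "x \<in> D k" by blast
      show "x \<in> f k"
      proof (cases "j \<le> k")
        case True
        then have "f k \<inter> D j = f j" by (rule coherent)
        with \<open>x \<in> f j\<close> show ?thesis by blast
      next
        case False
        then have "f j \<inter> D k = f k" by (intro coherent) simp
        with \<open>x \<in> f j\<close> \<open>x \<in> D k\<close> show ?thesis by blast
      qed
    qed
    show "f k \<subseteq> (\<Union>n. f n) \<inter> D k" using f_sub[of k] by blast
  qed
qed

text \<open>A form of Koenig's lemma.\<close>

lemma inverse_limit_nonempty:
  fixes D :: "nat \<Rightarrow> 'a set" and S :: "nat \<Rightarrow> 'a set set"
  assumes "mono D" and finite_D: "\<And>k. finite (D k)"
    and S_ne: "\<And>k. S k \<noteq> {}" and S_sub: "\<And>k. S k \<subseteq> Pow (D k)"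
    and restrict: "\<And>k m Y. k \<le> m \<Longrightarrow> Y \<in> S m \<Longrightarrow> Y \<inter> D k \<in> S k"
  shows "\<exists>M. M \<subseteq> (\<Union>k. D k) \<and> (\<forall>k. M \<inter> D k \<in> S k)"
proof -
  have pigeonhole: "\<exists>X\<in>C. \<forall>m\<ge>k. \<exists>Y\<in>S m. Y \<inter> D k = X"
    if "finite C" "\<And>m. k \<le> m \<Longrightarrow> \<exists>Y\<in>S m. Y \<inter> D k \<in> C" for C k
    by (rule pigeonhole_restriction[OF \<open>mono D\<close>]) (fact restrict that)+
  have finite_S: "finite (S k)" for k
    using finite_subset[OF S_sub] finite_D by simp
  define extendable where
    "extendable k X \<longleftrightarrow> X \<in> S k \<and> (\<forall>m\<ge>k. \<exists>Y\<in>S m. Y \<inter> D k = X)" for k X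
  have "\<exists>Y\<in>S m. Y \<inter> D 0 \<in> S 0" if "0 \<le> m" for m
    using S_ne[of m] restrict[OF that] by blast
  from pigeonhole[OF finite_S this] have base: "\<exists>X. extendable 0 X"
    unfolding extendable_def by blast
  have step: "\<exists>X'. extendable (Suc k) X' \<and> X' \<inter> D k = X" if "extendable k X" for X k
  proof -
    let ?C = "{X' \<in> S (Suc k). X' \<inter> D k = X}"
    have "finite ?C"
      by (rule rev_finite_subset[OF finite_S]) auto
    moreover have "\<exists>Y\<in>S m. Y \<inter> D (Suc k) \<in> ?C" if "Suc k \<le> m" for m
    proof -
      obtain Y where "Y \<in> S m" "Y \<inter> D k = X"
        using \<open>extendable k X\<close> Suc_leD[OF \<open>Suc k \<le> m\<close>] unfolding extendable_def by blast
      moreover have "D k \<subseteq> D (Suc k)" using \<open>mono D\<close> by (rule monoD) simp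
      ultimately show ?thesis
        using restrict[OF \<open>Suc k \<le> m\<close>] by blast
    qed
    ultimately obtain X' where "X' \<in> ?C" "\<forall>m\<ge>Suc k. \<exists>Y\<in>S m. Y \<inter> D (Suc k) = X'"
      using pigeonhole[of ?C "Suc k"] by blast
    then show ?thesis unfolding extendable_def by blast
  qed
  obtain f where f: "\<And>n. extendable n (f n)" "\<And>n. f (Suc n) \<inter> D n = f n"
    using dependent_nat_choice[of extendable "\<lambda>n X X'. X' \<inter> D n = X", OF base step] by blast
  have f_S: "f n \<in> S n" for n
    using f(1)[of n] unfolding extendable_def by blast
  have f_sub: "f n \<subseteq> D n" for n
    using f_S[of n] S_sub[of n] by blast
  have "(\<Union>n. f n) \<inter> D k \<in> S k" for k
    using Union_coherent_inter[OF \<open>mono D\<close> f_sub f(2)] f_S by simp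
  moreover have "(\<Union>n. f n) \<subseteq> (\<Union>k. D k)"
    using f_sub by blast
  ultimately show ?thesis by blast
qed

definition deps_upto :: "'a rule set \<Rightarrow> (nat \<Rightarrow> 'a) \<Rightarrow> nat \<Rightarrow> 'a set" where
  "deps_upto P p k = {B. \<exists>i\<in>{1..k}. depends P (p i) B}"

lemma finite_deps_upto:
  assumes "finitely_recursive P"
  shows "finite (deps_upto P p k)"
proof -
  have "deps_upto P p k = (\<Union>i\<in>{1..k}. {B. depends P (p i) B})"
    unfolding deps_upto_def by auto
  with assms show ?thesis
    unfolding finitely_recursive_def by auto
qed

lemma mono_deps_upto: "mono (deps_upto P p)"
  unfolding deps_upto_def by (intro monoI) auto

lemma module_seq_mono: "k \<le> m \<Longrightarrow> module_seq P p k \<subseteq> module_seq P p m"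
  unfolding module_seq_def by fastforce

lemma module_seq_subset: "module_seq P p k \<subseteq> P"
  unfolding module_seq_def by auto

lemma atom_module_seq_subset: "atom (module_seq P p k) \<subseteq> deps_upto P p k"
proof
  fix B assume "B \<in> atom (module_seq P p k)"
  then obtain r i A where "r \<in> P" "B \<in> rule_atoms r" "i \<in> {1..k}" "A \<in> head r"
    and "depends P (p i) A"
    unfolding atom_def module_seq_def by auto
  then have "dep_edge P A B"
    unfolding dep_edge_def by blast
  with \<open>depends P (p i) A\<close> have "depends P (p i) B"
    unfolding depends_def by (rule rtranclp.rtrancl_into_rtrancl)
  with \<open>i \<in> {1..k}\<close> show "B \<in> deps_upto P p k" unfolding deps_upto_def by blast
qed

lemma module_seq_head_closed:
  "r \<in> P \<Longrightarrow> head r \<inter> deps_upto P p k \<noteq> {} \<Longrightarrow> r \<in> module_seq P p k"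
  unfolding deps_upto_def module_seq_def by blast

lemma eventually_in_module_seq:
  assumes "disjunctive_program P" "enumeration P p" "r \<in> P"
  shows "\<forall>\<^sub>F k in sequentially. r \<in> module_seq P p k"
proof -
  from assms(1,3) obtain A where A: "A \<in> head r"
    unfolding disjunctive_program_def head_def by (metis list.set_intros(1) neq_Nil_conv)
  with assms(3) have "A \<in> GH P" unfolding GH_def by blast
  with assms(2) obtain j where "j \<ge> 1" "p j = A"
    unfolding enumeration_def by (metis atLeast_iff imageE)
  with assms(3) A have "r \<in> module_seq P p j"
    unfolding module_seq_def depends_def by force
  then show ?thesis
    by (intro eventually_sequentiallyI[of j]) (rule subsetD[OF module_seq_mono])
qed

lemma eventually_subset_atom_module_seq:
  assumes "disjunctive_program P" "enumeration P p" "finite X" "X \<subseteq> atom P"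
  shows "\<forall>\<^sub>F k in sequentially. X \<subseteq> atom (module_seq P p k)"
proof -
  have "\<forall>\<^sub>F k in sequentially. x \<in> atom (module_seq P p k)" if "x \<in> X" for x
  proof -
    from that assms(4) obtain r where "r \<in> P" "x \<in> rule_atoms r"
      unfolding atom_def by auto
    with eventually_in_module_seq[OF assms(1,2) \<open>r \<in> P\<close>] show ?thesis
      unfolding atom_def by (auto elim: eventually_mono)
  qed
  with \<open>finite X\<close> have "\<forall>\<^sub>F k in sequentially. \<forall>x\<in>X. x \<in> atom (module_seq P p k)"
    by (intro eventually_ball_finite) auto
  then show ?thesis by (simp add: subset_eq)
qed

lemma stable_model_module_seq_restrict:
  "module_seq P p k \<subseteq> Q \<Longrightarrow> Q \<subseteq> P \<Longrightarrow> stable_model Q M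
    \<Longrightarrow> stable_model (module_seq P p k) (M \<inter> deps_upto P p k)"
  by (rule stable_model_restrict[OF _ atom_module_seq_subset]) (auto intro: module_seq_head_closed)

lemma stable_model_module_seq_subset:
  "stable_model (module_seq P p k) M \<Longrightarrow> M \<subseteq> deps_upto P p k"
  using stable_model_subset_atom atom_module_seq_subset[of P p k] by blast

lemma stable_model_module_seq_limit:
  assumes "disjunctive_program P" "enumeration P p"
    and "M \<subseteq> (\<Union>n. deps_upto P p (k0 + n))"
    and "\<And>n. stable_model (module_seq P p (k0 + n)) (M \<inter> deps_upto P p (k0 + n))"
  shows "stable_model P M"
proof (rule stable_model_limit[OF module_seq_subset _ atom_module_seq_subset assms(3,4)])
  fix r assume "r \<in> P"
  from eventually_in_module_seq[OF assms(1,2) this] obtain N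
    where "\<forall>k\<ge>N. r \<in> module_seq P p k"
    unfolding eventually_sequentially by blast
  then show "\<exists>n. r \<in> module_seq P p (k0 + n)"
    using le_add2 by blast
qed

lemma skeptical_consequence_module_seq_lift:
  assumes "skeptical_consequence (module_seq P p k) F"
    and "form_atoms F \<subseteq> atom (module_seq P p k)"
  shows "skeptical_consequence P F"
  unfolding skeptical_consequence_def
proof (intro allI impI)
  fix M assume "stable_model P M"
  then have "stable_model (module_seq P p k) (M \<inter> deps_upto P p k)"
    by (rule stable_model_module_seq_restrict[OF module_seq_subset order_refl])
  with assms(1) have "holds (M \<inter> deps_upto P p k) F"
    unfolding skeptical_consequence_def by blast
  moreover have "form_atoms F \<subseteq> deps_upto P p k"
    using assms(2) atom_module_seq_subset[of P p k] by blast
  ultimately show "holds M F" by (simp add: holds_inter)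
qed

lemma skeptical_consequence_module_seq_compact:
  assumes "disjunctive_program P" "finitely_recursive P" "enumeration P p"
    and F_atoms: "form_atoms F \<subseteq> deps_upto P p k0"
    and "skeptical_consequence P F"
  shows "\<exists>k\<ge>k0. skeptical_consequence (module_seq P p k) F"
proof (rule ccontr)
  assume no_module: "\<not> ?thesis"
  \<comment> \<open>Levels are counted from k0, where the countermodels of F start to exist.\<close>
  define D where "D n = deps_upto P p (k0 + n)" for n
  define S where "S n = {Y. stable_model (module_seq P p (k0 + n)) Y \<and> \<not> holds Y F}" for n
  have D_mono: "D k \<subseteq> D m" if "k \<le> m" for k m
    unfolding D_def using that by (intro monoD[OF mono_deps_upto]) simp
  have F_D: "form_atoms F \<subseteq> D n" for n
    using F_atoms D_mono[of 0 n] unfolding D_def by simp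
  have "\<exists>M. M \<subseteq> (\<Union>n. D n) \<and> (\<forall>n. M \<inter> D n \<in> S n)"
  proof (rule inverse_limit_nonempty)
    show "mono D" using D_mono by (rule monoI)
    show "finite (D n)" for n
      unfolding D_def using assms(2) by (rule finite_deps_upto)
    show "S n \<noteq> {}" for n
      using no_module le_add1 unfolding S_def skeptical_consequence_def by blast
    show "S n \<subseteq> Pow (D n)" for n
      unfolding S_def D_def by (auto dest: stable_model_module_seq_subset)
    show "Y \<inter> D k \<in> S k" if "k \<le> m" "Y \<in> S m" for k m Y
    proof -
      have "module_seq P p (k0 + k) \<subseteq> module_seq P p (k0 + m)"
        using \<open>k \<le> m\<close> by (intro module_seq_mono) simp
      with \<open>Y \<in> S m\<close> show ?thesis
        using stable_model_module_seq_restrict[OF _ module_seq_subset] holds_inter[OF F_D]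
        unfolding S_def D_def by blast
    qed
  qed
  then obtain M where M: "M \<subseteq> (\<Union>n. D n)" "\<And>n. M \<inter> D n \<in> S n" by blast
  then have "stable_model P M"
    unfolding S_def D_def by (intro stable_model_module_seq_limit[OF assms(1,3)]) auto
  with assms(5) have "holds M F" unfolding skeptical_consequence_def by blast
  with M(2)[of 0] holds_inter[OF F_D] show False unfolding S_def by simp
qed

theorem theorem5p2:
  fixes P :: "'a rule set" and p :: "nat \<Rightarrow> 'a" and F :: "'a form"
  assumes "disjunctive_program P"
    and "finitely_recursive P"
    and "enumeration P p"
    and "form_atoms F \<subseteq> atom P"
  shows "skeptical_consequence P F \<longleftrightarrow>
    (\<exists>k\<ge>1. skeptical_consequence (module_seq P p k) F \<and> form_atoms F \<subseteq> atom (module_seq P p k))"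
proof
  assume F: "skeptical_consequence P F"
  have "\<forall>\<^sub>F k in sequentially. 1 \<le> k \<and> form_atoms F \<subseteq> atom (module_seq P p k)"
    using eventually_ge_at_top
      eventually_subset_atom_module_seq[OF assms(1,3) finite_form_atoms assms(4)]
    by (rule eventually_conj)
  then obtain k0 where k0: "1 \<le> k0" "form_atoms F \<subseteq> atom (module_seq P p k0)"
    using eventually_happens'[OF sequentially_bot] by blast
  then have "form_atoms F \<subseteq> deps_upto P p k0"
    using atom_module_seq_subset[of P p k0] by blast
  then obtain k where "k0 \<le> k" and sk: "skeptical_consequence (module_seq P p k) F"
    using skeptical_consequence_module_seq_compact[OF assms(1-3) _ F] by blast
  then have "atom (module_seq P p k0) \<subseteq> atom (module_seq P p k)"
    using module_seq_mono[of k0 k P p] unfolding atom_def by blast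
  with k0 \<open>k0 \<le> k\<close> sk show "\<exists>k\<ge>1. skeptical_consequence (module_seq P p k) F \<and>
      form_atoms F \<subseteq> atom (module_seq P p k)"
    by (meson order_trans subset_trans)
qed (blast intro: skeptical_consequence_module_seq_lift)

end
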